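(* Consider one execution of the Modified NCB algorithm with inputs $k$ and $W$, where $\sqrt T\le W\le T$, and assume $968kS\le T$. Let $i^*$ be an arm with $\mu_{i^*}=\mu^*$. On the event $E$, at every round $t$ of Phase 2, $\overline{\mathrm{NCB}}_{i^*,t}\ge\mu^*$, where $\overline{\mathrm{NCB}}_{i^*,t}$ denotes the value of $\overline{\mathrm{NCB}}_{i^*}$ at round $t$.
   Context: Bandit setup: $k$ arms, arm $i$ a distribution on $[0,1]$ with mean $\mu_i$, $\mu^*:=\max_i\mu_i>0$. $\log$ is the natural logarithm; $c:=3$; $T$ is the overall horizon and $S:=\frac{c^2\log T}{\mu^*}$. Modified NCB algorithm (inputs $k$, window $W$): maintain counts $n_i$ and empirical means $\widehat\mu_i$ (both initially $0$), round index $t=1$. Phase 1: while $\max_i n_i\widehat\mu_i\le 420c^2\log W$ and $t\le W$, pull a uniformly random arm, update, increment $t$. Phase 2: while $t\le W$, pull an arm maximizing $\overline{\mathrm{NCB}}_i:=\widehat\mu_i+2c\sqrt{2\widehat\mu_i\log W/n_i}$ (ties arbitrary), update, increment $t$. Canonical model: a $k\times T$ table $(Y_{i,s})$ of independent entries with $Y_{i,s}$ distributed as arm $i$, the $s$-th pull of arm $i$ yielding $Y_{i,s}$; $\widehat\mu_{i,s}:=\frac1s\sum_{r=1}^sY_{i,r}$. The uniform choices in Phase 1 are $U_1,U_2,\dots$, independent uniform in $[k]$ (independent of the table). Events: $E_1$: for every integer $r$ with $128kS\le r\le T$ and every arm $i$, the number of $r'\le r$ with $U_{r'}=i$ is at least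 $\frac{r}{2k}$ and at most $\frac{3r}{2k}$. $E_2$: for every arm $i$ with $\mu_i>\frac{\mu^*}{64}$ and every integer $s$ with $64S\le s\le T$, $|\mu_i-\widehat\mu_{i,s}|\le c\sqrt{\frac{\mu_i\log T}{s}}$. $E_3$: for every arm $j$ with $\mu_j\le\frac{\mu^*}{64}$ and every integer $s$ with $64S\le s\le T$, $\widehat\mu_{j,s}<\frac{\mu^*}{32}$. $E:=E_1\cap E_2\cap E_3$. *)

theory Defs
  imports "HOL-Analysis.Analysis"
begin

text \<open>Arms are 0..<k. Rounds are 1,2,... . The table entry Y i s is the s-th pull (s \<ge> 1) of arm i.
An execution is given by the sequence A of pulled arms, A t being the arm pulled in round t.\<close>

definition ncb_c :: real where "ncb_c = 3"

definition mu_star :: "nat \<Rightarrow> (nat \<Rightarrow> real) \<Rightarrow> real" where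
  "mu_star k \<mu> = Max (\<mu> ` {..<k})"

definition S_par :: "nat \<Rightarrow> (nat \<Rightarrow> real) \<Rightarrow> nat \<Rightarrow> real" where
  "S_par k \<mu> T = ncb_c ^ 2 * ln (real T) / mu_star k \<mu>"

text \<open>empirical mean of the first s samples of arm i (0 if s = 0)\<close>
definition emp_mean :: "(nat \<Rightarrow> nat \<Rightarrow> real) \<Rightarrow> nat \<Rightarrow> nat \<Rightarrow> real" where
  "emp_mean Y i s = (\<Sum>r = 1..s. Y i r) / real s"

text \<open>number of pulls of arm i before round t (i.e. the count n_i at the start of round t)\<close>
definition pulls :: "(nat \<Rightarrow> nat) \<Rightarrow> nat \<Rightarrow> nat \<Rightarrow> nat" where
  "pulls A i t = card {t'. 1 \<le> t' \<and> t' < t \<and> A t' = i}"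

definition ncb :: "(nat \<Rightarrow> nat \<Rightarrow> real) \<Rightarrow> (nat \<Rightarrow> nat) \<Rightarrow> nat \<Rightarrow> nat \<Rightarrow> nat \<Rightarrow> real" where
  "ncb Y A W i t =
     emp_mean Y i (pulls A i t)
     + 2 * ncb_c * sqrt (2 * emp_mean Y i (pulls A i t) * ln (real W) / real (pulls A i t))"

definition phase1_guard :: "nat \<Rightarrow> (nat \<Rightarrow> nat \<Rightarrow> real) \<Rightarrow> (nat \<Rightarrow> nat) \<Rightarrow> nat \<Rightarrow> nat \<Rightarrow> bool" where
  "phase1_guard k Y A W t =
     (Max ((\<lambda>i. real (pulls A i t) * emp_mean Y i (pulls A i t)) ` {..<k})
        \<le> 420 * ncb_c ^ 2 * ln (real W) \<and> t \<le> W)"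

definition in_phase1 :: "nat \<Rightarrow> (nat \<Rightarrow> nat \<Rightarrow> real) \<Rightarrow> (nat \<Rightarrow> nat) \<Rightarrow> nat \<Rightarrow> nat \<Rightarrow> bool" where
  "in_phase1 k Y A W t = (1 \<le> t \<and> (\<forall>t'. 1 \<le> t' \<and> t' \<le> t \<longrightarrow> phase1_guard k Y A W t'))"

definition in_phase2 :: "nat \<Rightarrow> (nat \<Rightarrow> nat \<Rightarrow> real) \<Rightarrow> (nat \<Rightarrow> nat) \<Rightarrow> nat \<Rightarrow> nat \<Rightarrow> bool" where
  "in_phase2 k Y A W t = (1 \<le> t \<and> t \<le> W \<and> \<not> in_phase1 k Y A W t)"

text \<open>A is an execution of Modified NCB (with some tie-breaking) driven by table Y and uniform choices U\<close>
definition valid_run :: "nat \<Rightarrow> nat \<Rightarrow> (nat \<Rightarrow> nat \<Rightarrow> real) \<Rightarrow> (nat \<Rightarrow> nat) \<Rightarrow> (nat \<Rightarrow> nat) \<Rightarrow> bool" where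
  "valid_run k W Y U A =
     (\<forall>t. 1 \<le> t \<and> t \<le> W \<longrightarrow>
        A t < k
        \<and> (in_phase1 k Y A W t \<longrightarrow> A t = U t)
        \<and> (in_phase2 k Y A W t \<longrightarrow> (\<forall>j<k. ncb Y A W j t \<le> ncb Y A W (A t) t)))"

definition event_E1 :: "nat \<Rightarrow> (nat \<Rightarrow> real) \<Rightarrow> nat \<Rightarrow> (nat \<Rightarrow> nat) \<Rightarrow> bool" where
  "event_E1 k \<mu> T U =
     (\<forall>r::nat. 128 * real k * S_par k \<mu> T \<le> real r \<and> r \<le> T \<longrightarrow>
        (\<forall>i<k. real r / (2 * real k) \<le> real (card {r'. 1 \<le> r' \<and> r' \<le> r \<and> U r' = i})
             \<and> real (card {r'. 1 \<le> r' \<and> r' \<le> r \<and> U r' = i}) \<le> 3 * real r / (2 * real k)))"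

definition event_E2 :: "nat \<Rightarrow> (nat \<Rightarrow> real) \<Rightarrow> nat \<Rightarrow> (nat \<Rightarrow> nat \<Rightarrow> real) \<Rightarrow> bool" where
  "event_E2 k \<mu> T Y =
     (\<forall>i<k. \<mu> i > mu_star k \<mu> / 64 \<longrightarrow>
        (\<forall>s::nat. 64 * S_par k \<mu> T \<le> real s \<and> s \<le> T \<longrightarrow>
           \<bar>\<mu> i - emp_mean Y i s\<bar> \<le> ncb_c * sqrt (\<mu> i * ln (real T) / real s)))"

definition event_E3 :: "nat \<Rightarrow> (nat \<Rightarrow> real) \<Rightarrow> nat \<Rightarrow> (nat \<Rightarrow> nat \<Rightarrow> real) \<Rightarrow> bool" where
  "event_E3 k \<mu> T Y =
     (\<forall>j<k. \<mu> j \<le> mu_star k \<mu> / 64 \<longrightarrow>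
        (\<forall>s::nat. 64 * S_par k \<mu> T \<le> real s \<and> s \<le> T \<longrightarrow>
           emp_mean Y j s < mu_star k \<mu> / 32))"

end

theory Submission
  imports Defs
begin

text \<open>Phase 2 begins only once some arm has collected a total reward above
  \<open>420 c\<^sup>2 ln W \<ge> 1890 ln T\<close>. On \<open>E\<^sub>2 \<inter> E\<^sub>3\<close> an arm with at most \<open>192 S + 3/2\<close> pulls
  collects less, and by the upper bound of \<open>E\<^sub>1\<close> fewer than \<open>128 k S\<close> uniform rounds give no arm more
  pulls than that. So Phase 1 lasts at least \<open>128 k S\<close> rounds, and by the lower bound of \<open>E\<^sub>1\<close> the
  optimal arm has then been pulled at least \<open>64 S\<close> times. With that many samples \<open>E\<^sub>2\<close> keeps its
  empirical mean within \<open>\<mu>\<^sup>*/8\<close> of \<open>\<mu>\<^sup>*\<close>, and the exploration bonus exceeds this deviation.\<close>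

definition draws :: "(nat \<Rightarrow> nat) \<Rightarrow> nat \<Rightarrow> nat \<Rightarrow> nat" where
  "draws U i r = card {r'. 1 \<le> r' \<and> r' \<le> r \<and> U r' = i}"

lemma draws_mono: "r \<le> r' \<Longrightarrow> draws U i r \<le> draws U i r'"
  unfolding draws_def by (intro card_mono) auto

lemma pulls_mono: "t \<le> t' \<Longrightarrow> pulls A i t \<le> pulls A i t'"
  unfolding pulls_def by (intro card_mono) auto

lemma pulls_le: "pulls A i t \<le> t - 1"
proof -
  have "pulls A i t \<le> card {1..<t}" unfolding pulls_def by (intro card_mono) auto
  thus ?thesis by simp
qed

lemma of_nat_mult_emp_mean: "real s * emp_mean Y i s = (\<Sum>r = 1..s. Y i r)"
  by (cases "s = 0") (simp_all add: emp_mean_def)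

lemma cumulative_reward_mono:
  assumes "s \<le> s'" and "\<And>r. s < r \<Longrightarrow> r \<le> s' \<Longrightarrow> 0 \<le> Y i r"
  shows "real s * emp_mean Y i s \<le> real s' * emp_mean Y i s'"
  unfolding of_nat_mult_emp_mean using assms by (intro sum_mono2) auto

lemma mu_le_mu_star: "i < k \<Longrightarrow> \<mu> i \<le> mu_star k \<mu>"
  unfolding mu_star_def by (intro Max_ge) auto

lemma phase2_first_guard_failure:
  assumes run: "valid_run k W Y U A" and p2: "in_phase2 k Y A W t"
  obtains t0 where "t0 \<le> t" "\<not> phase1_guard k Y A W t0"
    and "\<And>i. pulls A i t0 = draws U i (t0 - 1)"
proof -
  let ?fails = "\<lambda>t'. 1 \<le> t' \<and> \<not> phase1_guard k Y A W t'"
  define t0 where "t0 = (LEAST t'. ?fails t')"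
  obtain t' where t': "?fails t'" "t' \<le> t"
    using p2 unfolding in_phase2_def in_phase1_def by blast
  have t0: "?fails t0" unfolding t0_def by (rule LeastI) (fact t')
  have "t0 \<le> t" using Least_le[of ?fails, OF t'(1)] t'(2) unfolding t0_def by linarith
  have guard: "phase1_guard k Y A W t''" if "1 \<le> t''" "t'' < t0" for t''
    using not_less_Least[of t'' ?fails] that unfolding t0_def by blast
  have "A t'' = U t''" if "1 \<le> t''" "t'' < t0" for t''
  proof -
    have "in_phase1 k Y A W t''" unfolding in_phase1_def using that guard by force
    moreover have "t'' \<le> W" using that \<open>t0 \<le> t\<close> p2 unfolding in_phase2_def by linarith
    ultimately show ?thesis using run that(1) unfolding valid_run_def by blast
  qed
  hence "pulls A i t0 = draws U i (t0 - 1)" for i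
    unfolding pulls_def draws_def by (intro arg_cong[where f = card]) auto
  with t0 \<open>t0 \<le> t\<close> that show ?thesis by blast
qed

lemma guard_failure_heavy_arm:
  assumes "k \<ge> 1" "t \<le> W" "\<not> phase1_guard k Y A W t"
  obtains j where "j < k" "3780 * ln (real W) < real (pulls A j t) * emp_mean Y j (pulls A j t)"
proof -
  let ?F = "(\<lambda>i. real (pulls A i t) * emp_mean Y i (pulls A i t)) ` {..<k}"
  have "Max ?F \<in> ?F" using \<open>k \<ge> 1\<close> by (intro Max_in) (auto simp: lessThan_empty_iff)
  moreover have "3780 * ln (real W) < Max ?F"
    using assms(2,3) by (simp add: phase1_guard_def ncb_c_def)
  ultimately show ?thesis using that by auto
qed

text \<open>The sample-size bound makes the deviation at most \<open>\<mu>/8\<close>, so \<open>m \<ge> \<mu>/4\<close>, and then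
  the exploration bonus alone already covers the deviation.\<close>
lemma optimistic_index_ge_mean:
  fixes \<mu> L n m lw :: real
  assumes \<mu>: "\<mu> > 0" and L: "L \<ge> 0" and n: "n > 0" and nS: "64 * (9 * L / \<mu>) \<le> n"
    and dev: "\<bar>\<mu> - m\<bar> \<le> 3 * sqrt (\<mu> * L / n)" and lw: "L / 2 \<le> lw"
  shows "\<mu> \<le> m + 2 * 3 * sqrt (2 * m * lw / n)"
proof -
  define a where "a = sqrt (\<mu> * L / n)"
  have "\<mu> * L / n \<le> (\<mu> / 24)\<^sup>2" using nS \<mu> n by (simp add: field_simps power2_eq_square)
  hence "a \<le> \<mu> / 24" unfolding a_def using \<mu> real_sqrt_le_mono by fastforce
  hence m: "\<mu> / 4 \<le> m" using dev by (simp add: a_def)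
  have "\<mu> / 4 * L \<le> 2 * m * lw"
  proof -
    have "\<mu> / 4 * L \<le> m * L" using m L by (rule mult_right_mono)
    also have "\<dots> \<le> m * (2 * lw)" using lw m \<mu> by (intro mult_left_mono) auto
    finally show ?thesis by simp
  qed
  hence "\<mu> / 4 * L / n \<le> 2 * m * lw / n" using n by (intro divide_right_mono) auto
  hence "sqrt (\<mu> / 4 * L / n) \<le> sqrt (2 * m * lw / n)" by simp
  moreover have "sqrt (\<mu> / 4 * L / n) = a / 2" unfolding a_def
    by (simp add: real_sqrt_divide real_sqrt_mult)
  ultimately show ?thesis using dev unfolding a_def[symmetric] by linarith
qed

text \<open>For \<open>L = ln T\<close> the bound \<open>1890 L\<close> is at most the Phase-1 threshold \<open>420 c\<^sup>2 ln W\<close>,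
  because \<open>ln W \<ge> L / 2\<close>.\<close>
lemma small_sample_reward_le:
  fixes s e \<nu> \<mu> L :: real
  assumes s: "0 < s" "s \<le> 192 * (9 * L / \<mu>) + 3/2"
    and \<nu>: "0 \<le> \<nu>" "\<nu> \<le> \<mu>" and \<mu>: "0 < \<mu>" "\<mu> \<le> 1" and L: "1/2 \<le> L"
    and e: "e \<le> \<nu> + 3 * sqrt (\<nu> * L / s)"
  shows "s * e \<le> 1890 * L"
proof -
  have s\<mu>: "s * \<mu> \<le> 1728 * L + 3/2" using s \<mu> by (simp add: field_simps)
  have "s * sqrt (\<nu> * L / s) = sqrt (s\<^sup>2) * sqrt (\<nu> * L / s)" using s by simp
  also have "\<dots> = sqrt (\<nu> * L * s)"
    unfolding real_sqrt_mult[symmetric] using s by (simp add: power2_eq_square)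
  finally have "s * e \<le> s * \<nu> + 3 * sqrt (\<nu> * L * s)"
    using mult_left_mono[OF e less_imp_le[OF s(1)]] by (simp add: distrib_left)
  moreover have "sqrt (\<nu> * L * s) \<le> sqrt (\<mu> * L * s)"
    using s \<nu> L by (simp add: mult_right_mono)
  moreover have "s * \<nu> \<le> s * \<mu>" using s \<nu> by simp
  moreover have "sqrt (\<mu> * L * s) \<le> 54 * L - 1/2"
  proof -
    have "\<mu> * L * s = (s * \<mu>) * L" by simp
    also have "\<dots> \<le> (1728 * L + 3/2) * L" using s\<mu> L by (intro mult_right_mono) auto
    also have "\<dots> \<le> (54 * L - 1/2)\<^sup>2"
    proof -
      have "0 \<le> L * (1188 * L - 111/2)" using L by (intro mult_nonneg_nonneg) auto
      thus ?thesis by (simp add: power2_eq_square algebra_simps)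
    qed
    finally show ?thesis using L by (simp add: real_le_lsqrt)
  qed
  ultimately show ?thesis using s\<mu> by linarith
qed

locale ncb_execution =
  fixes k W T :: nat and \<mu> :: "nat \<Rightarrow> real"
    and Y :: "nat \<Rightarrow> nat \<Rightarrow> real" and U A :: "nat \<Rightarrow> nat"
  assumes k_pos: "k \<ge> 1"
    and mu_range: "\<forall>i<k. 0 \<le> \<mu> i \<and> \<mu> i \<le> 1"
    and mu_star_pos: "mu_star k \<mu> > 0"
    and Y_range: "\<forall>i<k. \<forall>s. 1 \<le> s \<and> s \<le> T \<longrightarrow> 0 \<le> Y i s \<and> Y i s \<le> 1"
    and W_lower: "sqrt (real T) \<le> real W"
    and W_upper: "W \<le> T"
    and T_large: "968 * real k * S_par k \<mu> T \<le> real T"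
    and run: "valid_run k W Y U A"
    and E1: "event_E1 k \<mu> T U"
    and E2: "event_E2 k \<mu> T Y"
    and E3: "event_E3 k \<mu> T Y"
begin

abbreviation S :: real where "S \<equiv> S_par k \<mu> T"

lemma mu_star_le_1: "mu_star k \<mu> \<le> 1"
proof -
  have "mu_star k \<mu> \<in> \<mu> ` {..<k}"
    unfolding mu_star_def using k_pos by (intro Max_in) (auto simp: lessThan_empty_iff)
  thus ?thesis using mu_range by auto
qed

lemma S_eq: "S = 9 * ln (real T) / mu_star k \<mu>"
  by (simp add: S_par_def ncb_c_def)

lemma ln_T_ge_half:
  assumes "2 \<le> T" shows "1/2 \<le> ln (real T)"
proof -
  have "ln 2 \<le> ln (real T)" using assms by simp
  thus ?thesis using ln2_ge_two_thirds by linarith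
qed

lemma S_pos: "2 \<le> T \<Longrightarrow> 0 < S"
  using ln_T_ge_half mu_star_pos by (simp add: S_eq)

lemma S_le_T: "2 \<le> T \<Longrightarrow> 128 * real k * S \<le> real T"
proof -
  assume "2 \<le> T"
  hence "0 \<le> real k * S" using S_pos by simp
  thus ?thesis using T_large by linarith
qed

lemma half_ln_T_le_ln_W: "ln (real T) / 2 \<le> ln (real W)"
proof (cases "T = 0")
  case False
  hence "0 < sqrt (real T)" by simp
  moreover have "0 < real W" using calculation W_lower by linarith
  ultimately have "ln (sqrt (real T)) \<le> ln (real W)" using W_lower by simp
  thus ?thesis by (simp add: ln_sqrt)
qed (cases W; simp)

lemma few_pulls_reward_le:
  assumes j: "j < k" and T: "2 \<le> T" and n: "n \<le> T" "real n \<le> 192 * S + 3/2"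
  shows "real n * emp_mean Y j n \<le> 1890 * ln (real T)"
proof -
  define s where "s = max n (nat \<lceil>64 * S\<rceil>)"
  have S0: "0 < S" using S_pos T .
  have s64: "64 * S \<le> real s" unfolding s_def by linarith
  hence s0: "0 < real s" using S0 by linarith
  have "S \<le> real k * S" using mult_right_mono[of 1 "real k" S] k_pos S0 by simp
  hence "64 * S \<le> real T" using S_le_T[OF T] S0 by linarith
  hence sT: "s \<le> T" unfolding s_def using n by (simp add: ceiling_le_iff nat_le_iff)
  have s_le: "real s \<le> 192 * S + 3/2" unfolding s_def using n S0 by linarith
  have "real n * emp_mean Y j n \<le> real s * emp_mean Y j s"
    using Y_range j sT by (intro cumulative_reward_mono) (auto simp: s_def[symmetric], simp add: s_def)
  moreover obtain \<nu> where \<nu>: "0 \<le> \<nu>" "\<nu> \<le> mu_star k \<mu>"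
    and concentrated: "emp_mean Y j s \<le> \<nu> + 3 * sqrt (\<nu> * ln (real T) / real s)"
  proof (cases "\<mu> j > mu_star k \<mu> / 64")
    case True
    hence "\<bar>\<mu> j - emp_mean Y j s\<bar> \<le> 3 * sqrt (\<mu> j * ln (real T) / real s)"
      using E2 j s64 sT unfolding event_E2_def ncb_c_def by auto
    thus ?thesis using that[of "\<mu> j"] mu_range mu_le_mu_star j by auto
  next
    case False
    hence "emp_mean Y j s < mu_star k \<mu> / 32" using E3 j s64 sT unfolding event_E3_def by auto
    moreover have "0 \<le> sqrt (mu_star k \<mu> * ln (real T) / real s)"
      using mu_star_pos ln_T_ge_half[OF T] by simp
    ultimately have "emp_mean Y j s \<le> mu_star k \<mu> + 3 * sqrt (mu_star k \<mu> * ln (real T) / real s)"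
      using mu_star_pos by linarith
    thus ?thesis using that[of "mu_star k \<mu>"] mu_star_pos by simp
  qed
  moreover have "real s * emp_mean Y j s \<le> 1890 * ln (real T)"
    using s0 s_le \<nu> mu_star_pos mu_star_le_1 ln_T_ge_half[OF T] concentrated
    unfolding S_eq by (intro small_sample_reward_le) auto
  ultimately show ?thesis by linarith
qed

lemma short_prefix_draws_le:
  assumes j: "j < k" and T: "2 \<le> T" and r: "real r < 128 * real k * S"
  shows "real (draws U j r) \<le> 192 * S + 3/2"
proof -
  define r1 where "r1 = nat \<lceil>128 * real k * S\<rceil>"
  have "0 \<le> 128 * real k * S" using S_pos[OF T] by simp
  hence r1: "128 * real k * S \<le> real r1" "real r1 \<le> 128 * real k * S + 1"
    unfolding r1_def by linarith+
  have "r1 \<le> T" using S_le_T[OF T] unfolding r1_def by (simp add: ceiling_le_iff nat_le_iff)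
  have "r \<le> r1" using r r1(1) by linarith
  hence "real (draws U j r) \<le> real (draws U j r1)" by (simp add: draws_mono)
  also have "\<dots> \<le> 3 * real r1 / (2 * real k)"
    using E1 r1(1) \<open>r1 \<le> T\<close> j unfolding event_E1_def draws_def by blast
  also have "\<dots> \<le> 3 * (128 * real k * S + 1) / (2 * real k)"
    using r1(2) by (intro divide_right_mono) auto
  also have "\<dots> = 192 * S + 3 / (2 * real k)" using k_pos by (simp add: field_simps)
  also have "\<dots> \<le> 192 * S + 3/2" using k_pos by (simp add: field_simps)
  finally show ?thesis .
qed

lemma warmup_before_guard_failure:
  assumes t0: "t0 \<le> W" "\<not> phase1_guard k Y A W t0"
    and warm: "\<And>i. pulls A i t0 = draws U i (t0 - 1)"
  shows "2 \<le> T" and "128 * real k * S \<le> real (t0 - 1)"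
proof -
  obtain j where j: "j < k"
    and heavy: "3780 * ln (real W) < real (pulls A j t0) * emp_mean Y j (pulls A j t0)"
    using guard_failure_heavy_arm[OF k_pos t0] .
  have "0 \<le> ln (real W)" by (cases W) simp_all
  hence "pulls A j t0 \<noteq> 0" using heavy by (cases "pulls A j t0") auto
  hence "2 \<le> t0" using pulls_le[of A j t0] by linarith
  thus T: "2 \<le> T" using t0 W_upper by linarith
  show "128 * real k * S \<le> real (t0 - 1)"
  proof (rule ccontr)
    assume "\<not> ?thesis"
    hence "real (pulls A j t0) \<le> 192 * S + 3/2" using short_prefix_draws_le[OF j T] warm by simp
    moreover have "pulls A j t0 \<le> T" using pulls_le[of A j t0] t0 W_upper by linarith
    ultimately have "real (pulls A j t0) * emp_mean Y j (pulls A j t0) \<le> 1890 * ln (real T)"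
      using few_pulls_reward_le[OF j T] by blast
    thus False using heavy half_ln_T_le_ln_W by linarith
  qed
qed

lemma phase2_pulls_ge:
  assumes p2: "in_phase2 k Y A W t" and i: "i < k"
  shows "2 \<le> T" and "64 * S \<le> real (pulls A i t)"
proof -
  obtain t0 where t0: "t0 \<le> t" "\<not> phase1_guard k Y A W t0"
    and warm: "\<And>i. pulls A i t0 = draws U i (t0 - 1)"
    using phase2_first_guard_failure[OF run p2] by blast
  have "t0 \<le> W" using t0 p2 by (simp add: in_phase2_def)
  note warmup = warmup_before_guard_failure[OF this t0(2) warm]
  show "2 \<le> T" by (fact warmup(1))
  have "t0 - 1 \<le> T" using \<open>t0 \<le> W\<close> W_upper by linarith
  hence "real (t0 - 1) / (2 * real k) \<le> real (pulls A i t0)"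
    using E1 warmup(2) i unfolding event_E1_def warm draws_def by blast
  moreover have "64 * S \<le> real (t0 - 1) / (2 * real k)" using warmup(2) k_pos by (simp add: field_simps)
  moreover have "real (pulls A i t0) \<le> real (pulls A i t)" using pulls_mono[OF t0(1)] by simp
  ultimately show "64 * S \<le> real (pulls A i t)" by linarith
qed

end

theorem lemma9:
  fixes k W T istar :: nat and \<mu> :: "nat \<Rightarrow> real"
    and Y :: "nat \<Rightarrow> nat \<Rightarrow> real" and U A :: "nat \<Rightarrow> nat"
  assumes k_pos: "k \<ge> 1"
    and mu_range: "\<forall>i<k. 0 \<le> \<mu> i \<and> \<mu> i \<le> 1"
    and mu_star_pos: "mu_star k \<mu> > 0"
    and Y_range: "\<forall>i<k. \<forall>s. 1 \<le> s \<and> s \<le> T \<longrightarrow> 0 \<le> Y i s \<and> Y i s \<le> 1"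
    and U_range: "\<forall>t\<ge>1. U t < k"
    and W_lower: "sqrt (real T) \<le> real W"
    and W_upper: "W \<le> T"
    and T_large: "968 * real k * S_par k \<mu> T \<le> real T"
    and istar: "istar < k" "\<mu> istar = mu_star k \<mu>"
    and run: "valid_run k W Y U A"
    and E1: "event_E1 k \<mu> T U"
    and E2: "event_E2 k \<mu> T Y"
    and E3: "event_E3 k \<mu> T Y"
  shows "\<forall>t. in_phase2 k Y A W t \<longrightarrow> ncb Y A W istar t \<ge> mu_star k \<mu>"
proof (intro allI impI)
  interpret ncb_execution k W T \<mu> Y U A
    using k_pos mu_range mu_star_pos Y_range W_lower W_upper T_large run E1 E2 E3
    by unfold_locales
  fix t assume p2: "in_phase2 k Y A W t"
  define n where "n = pulls A istar t"
  have T: "2 \<le> T" and nS: "64 * S_par k \<mu> T \<le> real n"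
    using phase2_pulls_ge[OF p2 istar(1)] by (simp_all add: n_def)
  have "n \<le> T" using pulls_le[of A istar t] p2 W_upper unfolding n_def in_phase2_def by linarith
  hence "\<bar>mu_star k \<mu> - emp_mean Y istar n\<bar> \<le> 3 * sqrt (mu_star k \<mu> * ln (real T) / real n)"
    using E2 istar nS mu_star_pos unfolding event_E2_def ncb_c_def by auto
  moreover have "0 < real n" using nS S_pos[OF T] by linarith
  ultimately have "mu_star k \<mu> \<le>
      emp_mean Y istar n + 2 * 3 * sqrt (2 * emp_mean Y istar n * ln (real W) / real n)"
    using mu_star_pos ln_T_ge_half[OF T] nS half_ln_T_le_ln_W unfolding S_eq
    by (intro optimistic_index_ge_mean) auto
  thus "mu_star k \<mu> \<le> ncb Y A W istar t" by (simp add: ncb_def n_def ncb_c_def)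
qed

end
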